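(* Let $\Lambda$ be a proper $H^*$-algebra and let $L$ be a Hilbert $\Lambda$-module. Then the unit ball $B_1(L)=\{x\in L:\|x\|\le1\}$ is compact in the $\Lambda$-weak$^*$ topology on $L$, namely the topology with base consisting of the sets \[W_{x_0,y_1,\dots,y_n,S_1,\dots,S_n,\delta}=\{x\in L:\ |\mathrm{sp}(S_j([x,y_j]-[x_0,y_j]))|<\delta,\ j=1,\dots,n\}\] for $n\in\mathbb N$, $x_0,y_1,\dots,y_n\in L$, $S_1,\dots,S_n\in C(\Lambda)$, $\delta>0$.
   Context: An $H^*$-algebra is a complex associative Banach algebra $\Lambda$ with an inner product $\langle\cdot,\cdot\rangle$ such that $\langle a,a\rangle=\|a\|^2$ for all $a\in\Lambda$, and such that for each $a\in\Lambda$ there is $a^*\in\Lambda$ with $\langle ab,c\rangle=\langle b,a^*c\rangle$ and $\langle ba,c\rangle=\langle b,ca^*\rangle$ for all $b,c\in\Lambda$. It is proper if $a\Lambda=0$ implies $a=0$ (equivalently, every $a$ has a unique adjoint $a^*$). The trace-class is $\tau(\Lambda)=\{ab: a,b\in\Lambda\}$; it is a self-adjoint ideal of $\Lambda$ carrying a norm $\tau(\cdot)$ with $\tau(a^*a)=\|a\|^2$, and there is a continuous linear form $\mathrm{sp}$ (trace) on $\tau(\Lambda)$ with $\mathrm{sp}(ab)=\mathrm{sp}(ba)=\langle a^*,b\rangle$ for $a,b\in\Lambda$. A Hilbert $\Lambda$-module is a right $\Lambda$-module $L$ with a map $[\cdot,\cdot]\colon L\times L\to\tau(\Lambda)$ such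 that for all $\alpha\in\mathbb C$, $x,y,z\in L$, $a\in\Lambda$: $[x,\alpha y]=\alpha[x,y]$, $[x,y+z]=[x,y]+[x,z]$, $[x,ya]=[x,y]a$, $[x,y]^*=[y,x]$; $L$ is a Hilbert space with inner product $\langle x,y\rangle=\mathrm{sp}([x,y])$ (and $\|x\|$ denotes the corresponding norm); and for every $x\neq 0$ there is $a\in\Lambda$, $a\neq0$, with $[x,x]=a^*a$. $C(\Lambda)$ is the operator-norm closure of the span of the left multiplications $L_b\colon x\mapsto bx$ ($b\in\Lambda$) inside the space of bounded linear operators $S$ on $\Lambda$ satisfying $S(xy)=(Sx)y$ for all $x,y\in\Lambda$. *)

theory Defs
  imports "HOL-Analysis.Analysis"
begin

definition cvs :: "(complex \<Rightarrow> 'v::ab_group_add \<Rightarrow> 'v) \<Rightarrow> bool" where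
  "cvs sc \<longleftrightarrow> (\<forall>x. sc 1 x = x) \<and> (\<forall>a b x. sc (a * b) x = sc a (sc b x))
     \<and> (\<forall>a b x. sc (a + b) x = sc a x + sc b x) \<and> (\<forall>a x y. sc a (x + y) = sc a x + sc a y)"

text \<open>Inner product, linear in the second and conjugate-linear in the first argument.\<close>
definition is_inner :: "(complex \<Rightarrow> 'v::ab_group_add \<Rightarrow> 'v) \<Rightarrow> ('v \<Rightarrow> 'v \<Rightarrow> complex) \<Rightarrow> bool" where
  "is_inner sc ip \<longleftrightarrow> (\<forall>x y z. ip x (y + z) = ip x y + ip x z)
     \<and> (\<forall>c x y. ip x (sc c y) = c * ip x y) \<and> (\<forall>x y. ip y x = cnj (ip x y))
     \<and> (\<forall>x. Re (ip x x) \<ge> 0) \<and> (\<forall>x. ip x x = 0 \<longrightarrow> x = 0)"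

definition inorm :: "('v \<Rightarrow> 'v \<Rightarrow> complex) \<Rightarrow> 'v \<Rightarrow> real" where
  "inorm ip x = sqrt (Re (ip x x))"

definition complete_wrt :: "('v::ab_group_add \<Rightarrow> real) \<Rightarrow> bool" where
  "complete_wrt nrm \<longleftrightarrow> (\<forall>X :: nat \<Rightarrow> 'v.
     (\<forall>e>0. \<exists>N. \<forall>m\<ge>N. \<forall>n\<ge>N. nrm (X m - X n) < e) \<longrightarrow>
     (\<exists>l. \<forall>e>0. \<exists>N. \<forall>n\<ge>N. nrm (X n - l) < e))"

definition is_adjoint :: "('a::ring \<Rightarrow> 'a \<Rightarrow> complex) \<Rightarrow> 'a \<Rightarrow> 'a \<Rightarrow> bool" where
  "is_adjoint ip a a' \<longleftrightarrow> (\<forall>b c. ip (a * b) c = ip b (a' * c) \<and> ip (b * a) c = ip b (c * a'))"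

definition H_star_algebra :: "(complex \<Rightarrow> 'a::ring \<Rightarrow> 'a) \<Rightarrow> ('a \<Rightarrow> 'a \<Rightarrow> complex) \<Rightarrow> bool" where
  "H_star_algebra sA ip \<longleftrightarrow> cvs sA
     \<and> (\<forall>c a b. sA c (a * b) = sA c a * b \<and> sA c (a * b) = a * sA c b)
     \<and> is_inner sA ip
     \<and> (\<forall>a b. inorm ip (a * b) \<le> inorm ip a * inorm ip b)
     \<and> complete_wrt (inorm ip)
     \<and> (\<forall>a. \<exists>a'. is_adjoint ip a a')"

definition proper_H_star_algebra :: "(complex \<Rightarrow> 'a::ring \<Rightarrow> 'a) \<Rightarrow> ('a \<Rightarrow> 'a \<Rightarrow> complex) \<Rightarrow> bool" where
  "proper_H_star_algebra sA ip \<longleftrightarrow> H_star_algebra sA ip \<and> (\<forall>a::'a. (\<forall>x. a * x = 0) \<longrightarrow> a = 0)"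

definition adj :: "('a::ring \<Rightarrow> 'a \<Rightarrow> complex) \<Rightarrow> 'a \<Rightarrow> 'a" where
  "adj ip a = (THE a'. is_adjoint ip a a')"

definition trace_class :: "'a::ring set" where
  "trace_class = {a * b | a b. True}"

definition sp :: "('a::ring \<Rightarrow> 'a \<Rightarrow> complex) \<Rightarrow> 'a \<Rightarrow> complex" where
  "sp ip t = (SOME z. \<exists>a b. t = a * b \<and> z = ip (adj ip a) b)"

definition Hilbert_module ::
  "(complex \<Rightarrow> 'a::ring \<Rightarrow> 'a) \<Rightarrow> ('a \<Rightarrow> 'a \<Rightarrow> complex) \<Rightarrow>
   (complex \<Rightarrow> 'b::ab_group_add \<Rightarrow> 'b) \<Rightarrow> ('b \<Rightarrow> 'a \<Rightarrow> 'b) \<Rightarrow> ('b \<Rightarrow> 'b \<Rightarrow> 'a) \<Rightarrow> bool" where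
  "Hilbert_module sA ip sL act br \<longleftrightarrow>
     cvs sL
     \<and> (\<forall>x y a. act (x + y) a = act x a + act y a)
     \<and> (\<forall>x a b. act x (a + b) = act x a + act x b)
     \<and> (\<forall>x a b. act x (a * b) = act (act x a) b)
     \<and> (\<forall>c x a. sL c (act x a) = act (sL c x) a \<and> sL c (act x a) = act x (sA c a))
     \<and> (\<forall>x y. br x y \<in> trace_class)
     \<and> (\<forall>\<alpha> x y. br x (sL \<alpha> y) = sA \<alpha> (br x y))
     \<and> (\<forall>x y z. br x (y + z) = br x y + br x z)
     \<and> (\<forall>x y a. br x (act y a) = br x y * a)
     \<and> (\<forall>x y. adj ip (br x y) = br y x)
     \<and> is_inner sL (\<lambda>x y. sp ip (br x y))
     \<and> complete_wrt (inorm (\<lambda>x y. sp ip (br x y)))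
     \<and> (\<forall>x. x \<noteq> 0 \<longrightarrow> (\<exists>a. a \<noteq> 0 \<and> br x x = adj ip a * a))"

definition Lnorm :: "('a::ring \<Rightarrow> 'a \<Rightarrow> complex) \<Rightarrow> ('b \<Rightarrow> 'b \<Rightarrow> 'a) \<Rightarrow> 'b \<Rightarrow> real" where
  "Lnorm ip br x = inorm (\<lambda>x y. sp ip (br x y)) x"

definition bounded_op :: "(complex \<Rightarrow> 'a::ring \<Rightarrow> 'a) \<Rightarrow> ('a \<Rightarrow> 'a \<Rightarrow> complex) \<Rightarrow> ('a \<Rightarrow> 'a) \<Rightarrow> bool" where
  "bounded_op sA ip S \<longleftrightarrow> (\<forall>x y. S (x + y) = S x + S y) \<and> (\<forall>c x. S (sA c x) = sA c (S x))
     \<and> (\<exists>K. \<forall>x. inorm ip (S x) \<le> K * inorm ip x)"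

definition left_mult_span :: "(complex \<Rightarrow> 'a::ring \<Rightarrow> 'a) \<Rightarrow> ('a \<Rightarrow> 'a) set" where
  "left_mult_span sA = {T. \<exists>(n::nat) c b. T = (\<lambda>x. \<Sum>i<n. sA (c i) (b i * x))}"

text \<open>C(Lambda): operator-norm closure of the span of left multiplications inside the bounded
  operators S with S(xy) = (Sx)y. The operator-norm condition ||S - T|| <= eps is unfolded.\<close>
definition C_alg :: "(complex \<Rightarrow> 'a::ring \<Rightarrow> 'a) \<Rightarrow> ('a \<Rightarrow> 'a \<Rightarrow> complex) \<Rightarrow> ('a \<Rightarrow> 'a) set" where
  "C_alg sA ip = {S. bounded_op sA ip S \<and> (\<forall>x y. S (x * y) = S x * y)
     \<and> (\<forall>e>0. \<exists>T\<in>left_mult_span sA. \<forall>x. inorm ip (S x - T x) \<le> e * inorm ip x)}"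

definition weak_star_base ::
  "(complex \<Rightarrow> 'a::ring \<Rightarrow> 'a) \<Rightarrow> ('a \<Rightarrow> 'a \<Rightarrow> complex) \<Rightarrow> ('b \<Rightarrow> 'b \<Rightarrow> 'a) \<Rightarrow> 'b set set" where
  "weak_star_base sA ip br =
     {{x. \<forall>j<(n::nat). cmod (sp ip (S j (br x (y j) - br x0 (y j)))) < \<delta>} | n x0 y S \<delta>.
        (\<forall>j<n. S j \<in> C_alg sA ip) \<and> \<delta> > 0}"

definition weak_star_topology ::
  "(complex \<Rightarrow> 'a::ring \<Rightarrow> 'a) \<Rightarrow> ('a \<Rightarrow> 'a \<Rightarrow> complex) \<Rightarrow> ('b \<Rightarrow> 'b \<Rightarrow> 'a) \<Rightarrow> 'b topology" where
  "weak_star_topology sA ip br = topology_generated_by (weak_star_base sA ip br)"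

end

theory Submission
  imports Defs
begin

text \<open>
  By the Riesz representation theorem, \<open>x \<mapsto> \<langle>x, -\<rangle>\<close> maps the unit ball of \<open>L\<close> bijectively onto the
  set of linear functionals bounded by the norm, a closed subset of a product of compact discs and
  hence compact for pointwise convergence (Tychonoff). For \<open>S \<in> C(\<Lambda>)\<close> the form
  \<open>(x, y) \<mapsto> sp(S[x, y])\<close> is sesquilinear, and it is bounded because writing \<open>[w, w] = e*e\<close> gives
  \<open>sp(S[w, w]) = \<langle>S(e*)*, e\<rangle>\<close> with \<open>\<parallel>S(e*)*\<parallel> \<le> K\<parallel>e\<parallel>\<close>. By Riesz again
  \<open>sp(S[x, y]) = \<langle>x, w\<rangle>\<close> for some \<open>w\<close>, so every basic \<open>\<Lambda>\<close>-weak* open set is weakly open: the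
  inverse of the Riesz map is continuous into the \<open>\<Lambda>\<close>-weak* topology and the unit ball, the
  image of a compact set, is compact.

  The facts about \<open>\<Lambda>\<close> behind this (adjoints are unique, the trace is well defined and additive,
  the involution is isometric) follow from properness and approximate units \<open>u\<close> with
  \<open>a u \<approx> a\<close> or \<open>u a \<approx> a\<close>, which come from the projection theorem: a vector orthogonal to the
  ideal generated by \<open>a\<close> is annihilated by properness.
\<close>

lemma real_le_0_if_le_eps_mult:
  fixes x K :: real
  assumes "\<And>e. e > 0 \<Longrightarrow> x \<le> e * K"
  shows "x \<le> 0"
proof (rule field_le_epsilon)
  fix e :: real assume "e > 0"
  then have "x \<le> e / (\<bar>K\<bar> + 1) * K"
    by (intro assms divide_pos_pos) auto
  also have "\<dots> \<le> e / (\<bar>K\<bar> + 1) * (\<bar>K\<bar> + 1)"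
    using \<open>e > 0\<close> by (intro mult_left_mono) auto
  finally show "x \<le> 0 + e"
    by simp
qed

subsection \<open>Complex inner product spaces\<close>

locale complex_inner_space =
  fixes sc :: "complex \<Rightarrow> 'v::ab_group_add \<Rightarrow> 'v" and ip :: "'v \<Rightarrow> 'v \<Rightarrow> complex"
  assumes cvs: "cvs sc" and inner: "is_inner sc ip"
begin

abbreviation nrm :: "'v \<Rightarrow> real" where "nrm \<equiv> inorm ip"

lemma sc_one [simp]: "sc 1 x = x"
  using cvs by (simp add: cvs_def)

lemma sc_mult: "sc (a * b) x = sc a (sc b x)"
  using cvs by (simp add: cvs_def)

lemma sc_add_left: "sc (a + b) x = sc a x + sc b x"
  using cvs by (simp add: cvs_def)

lemma sc_add_right: "sc a (x + y) = sc a x + sc a y"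
  using cvs by (simp add: cvs_def)

lemma sc_zero_left [simp]: "sc 0 x = 0"
  using sc_add_left[of 0 0 x] by simp

lemma sc_minus_one [simp]: "sc (- 1) x = - x"
  using sc_add_left[of 1 "- 1" x] by (simp add: eq_neg_iff_add_eq_0 add.commute)

lemma sc_diff_right: "sc a (x - y) = sc a x - sc a y"
  using sc_add_right[of a "x - y" y] by (simp add: eq_diff_eq)

lemma ip_add_right: "ip x (y + z) = ip x y + ip x z"
  using inner unfolding is_inner_def by fast

lemma ip_sc_right: "ip x (sc c y) = c * ip x y"
  using inner unfolding is_inner_def by fast

lemma ip_cnj: "ip y x = cnj (ip x y)"
  using inner unfolding is_inner_def by fast

lemma ip_self_nonneg: "Re (ip x x) \<ge> 0"
  using inner unfolding is_inner_def by fast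

lemma ip_self_eq_0D: "ip x x = 0 \<Longrightarrow> x = 0"
  using inner unfolding is_inner_def by fast

lemma ip_add_left: "ip (x + y) z = ip x z + ip y z"
  by (metis complex_cnj_add ip_add_right ip_cnj)

lemma ip_sc_left: "ip (sc c x) y = cnj c * ip x y"
  by (metis complex_cnj_mult complex_cnj_cnj ip_cnj ip_sc_right)

lemma ip_zero_right [simp]: "ip x 0 = 0"
  using ip_add_right[of x 0 0] by simp

lemma ip_zero_left [simp]: "ip 0 x = 0"
  using ip_add_left[of 0 0 x] by simp

lemma ip_minus_left: "ip (- x) y = - ip x y"
  using ip_add_left[of x "- x" y] by (simp add: eq_neg_iff_add_eq_0 add.commute)

lemma ip_minus_right: "ip x (- y) = - ip x y"
  using ip_add_right[of x y "- y"] by (simp add: eq_neg_iff_add_eq_0 add.commute)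

lemma ip_diff_right: "ip x (y - z) = ip x y - ip x z"
  using ip_add_right[of x "y - z" z] by (simp add: eq_diff_eq)

lemma ip_diff_left: "ip (x - y) z = ip x z - ip y z"
  using ip_add_left[of "x - y" y z] by (simp add: eq_diff_eq)

lemma nrm_nonneg [simp]: "nrm x \<ge> 0"
  by (simp add: inorm_def ip_self_nonneg)

lemma nrm_power2: "(nrm x)\<^sup>2 = Re (ip x x)"
  by (simp add: inorm_def ip_self_nonneg)

lemma ip_self_eq_nrm: "ip x x = complex_of_real ((nrm x)\<^sup>2)"
proof -
  have "Im (ip x x) = 0"
    using arg_cong[OF ip_cnj[of x x], of Im] by simp
  then show ?thesis
    by (simp add: nrm_power2 complex_eq_iff)
qed

lemma nrm_zero [simp]: "nrm 0 = 0"
  by (simp add: inorm_def)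

lemma nrm_eq_0_iff: "nrm x = 0 \<longleftrightarrow> x = 0"
  using ip_self_eq_0D ip_self_eq_nrm by fastforce

lemma eq_0_if_nrm_le_eps_mult:
  assumes "\<And>e. e > 0 \<Longrightarrow> nrm a \<le> e * K"
  shows "a = 0"
proof -
  have "nrm a \<le> 0"
    using assms by (rule real_le_0_if_le_eps_mult)
  then show ?thesis
    using nrm_eq_0_iff nrm_nonneg by (meson antisym)
qed

lemma cauchy_schwarz: "cmod (ip x y) \<le> nrm x * nrm y"
proof (cases "y = 0")
  case False
  define t where "t = (nrm y)\<^sup>2"
  have t: "t > 0"
    using False nrm_eq_0_iff by (simp add: t_def)
  define a where "a = ip y x"
  define c where "c = a / complex_of_real t"
  have "ip (x - sc c y) (x - sc c y) = ip x x - c * cnj a - cnj c * a + c * cnj c * t"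
    by (simp add: ip_diff_left ip_diff_right ip_sc_left ip_sc_right ip_self_eq_nrm[of y] a_def
        ip_cnj[of y x] t_def algebra_simps)
  also have "\<dots> = ip x x - a * cnj a / t"
    using t by (simp add: c_def field_simps)
  also have "\<dots> = ip x x - complex_of_real ((cmod a)\<^sup>2 / t)"
    by (simp only: of_real_divide complex_norm_square)
  finally have "(cmod a)\<^sup>2 / t \<le> (nrm x)\<^sup>2"
    using ip_self_nonneg[of "x - sc c y"] by (simp add: nrm_power2)
  then have "(cmod (ip x y))\<^sup>2 \<le> (nrm x * nrm y)\<^sup>2"
    using t by (simp add: a_def t_def ip_cnj[of y x] field_simps power_mult_distrib)
  then show ?thesis
    by (rule power2_le_imp_le) simp
qed simp

lemma nrm_add_power2: "(nrm (x + y))\<^sup>2 = (nrm x)\<^sup>2 + 2 * Re (ip x y) + (nrm y)\<^sup>2"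
proof -
  have "Re (ip y x) = Re (ip x y)"
    using ip_cnj[of y x] by simp
  then show ?thesis
    by (simp add: nrm_power2 ip_add_left ip_add_right)
qed

lemma nrm_triangle: "nrm (x + y) \<le> nrm x + nrm y"
proof -
  have "Re (ip x y) \<le> nrm x * nrm y"
    using cauchy_schwarz[of x y] complex_Re_le_cmod[of "ip x y"] by linarith
  then have "(nrm (x + y))\<^sup>2 \<le> (nrm x + nrm y)\<^sup>2"
    by (simp add: nrm_add_power2 power2_sum)
  then show ?thesis
    by (rule power2_le_imp_le) simp
qed

lemma nrm_diff_triangle: "nrm (x - z) \<le> nrm (x - y) + nrm (y - z)"
  using nrm_triangle[of "x - y" "y - z"] by simp

lemma nrm_sc: "nrm (sc c x) = cmod c * nrm x"
proof -
  have "ip (sc c x) (sc c x) = (c * cnj c) * ip x x"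
    by (simp add: ip_sc_left ip_sc_right algebra_simps)
  also have "\<dots> = complex_of_real ((cmod c * nrm x)\<^sup>2)"
    by (simp only: complex_norm_square[symmetric] ip_self_eq_nrm power_mult_distrib of_real_mult)
  finally have "(nrm (sc c x))\<^sup>2 = (cmod c * nrm x)\<^sup>2"
    using ip_self_eq_nrm[of "sc c x"] of_real_eq_iff by metis
  then show ?thesis
    by (metis norm_ge_zero nrm_nonneg power2_eq_imp_eq zero_le_mult_iff)
qed

lemma nrm_minus_commute: "nrm (x - y) = nrm (y - x)"
  using nrm_sc[of "- 1" "x - y"] by simp

lemma parallelogram: "(nrm (u + v))\<^sup>2 + (nrm (u - v))\<^sup>2 = 2 * (nrm u)\<^sup>2 + 2 * (nrm v)\<^sup>2"
  using nrm_add_power2[of u v] nrm_add_power2[of u "- v"] nrm_sc[of "- 1" v]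
  by (simp add: ip_minus_right)

lemma apollonius:
  "(nrm (a - b))\<^sup>2 = 2 * (nrm (w - a))\<^sup>2 + 2 * (nrm (w - b))\<^sup>2 - 4 * (nrm (w - sc (1/2) (a + b)))\<^sup>2"
proof -
  have "(w - a) + (w - b) = sc 2 (w - sc (1/2) (a + b))"
    using sc_add_left[of 1 1] by (simp add: sc_diff_right sc_mult[symmetric])
  then have "(nrm ((w - a) + (w - b)))\<^sup>2 = 4 * (nrm (w - sc (1/2) (a + b)))\<^sup>2"
    by (simp add: nrm_sc power_mult_distrib)
  then show ?thesis
    using parallelogram[of "w - a" "w - b"] nrm_minus_commute[of a b] by simp
qed

subsection \<open>Orthogonal projection and the Riesz representation\<close>

definition nrm_Cauchy :: "(nat \<Rightarrow> 'v) \<Rightarrow> bool" where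
  "nrm_Cauchy X \<longleftrightarrow> (\<forall>e>0. \<exists>N. \<forall>m\<ge>N. \<forall>n\<ge>N. nrm (X m - X n) < e)"

definition nrm_tendsto :: "(nat \<Rightarrow> 'v) \<Rightarrow> 'v \<Rightarrow> bool" where
  "nrm_tendsto X l \<longleftrightarrow> (\<forall>e>0. \<exists>N. \<forall>n\<ge>N. nrm (X n - l) < e)"

lemma complete_wrt_iff: "complete_wrt nrm \<longleftrightarrow> (\<forall>X. nrm_Cauchy X \<longrightarrow> (\<exists>l. nrm_tendsto X l))"
  by (simp add: complete_wrt_def nrm_Cauchy_def nrm_tendsto_def)

definition lin_subspace :: "'v set \<Rightarrow> bool" where
  "lin_subspace M \<longleftrightarrow> 0 \<in> M \<and> (\<forall>a\<in>M. \<forall>b\<in>M. a + b \<in> M) \<and> (\<forall>c. \<forall>a\<in>M. sc c a \<in> M)"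

lemma lin_subspace_diff:
  assumes "lin_subspace M" "a \<in> M" "b \<in> M"
  shows "a - b \<in> M"
  using assms sc_minus_one[of b] unfolding lin_subspace_def by (metis diff_conv_add_uminus)

definition nrm_closure :: "'v set \<Rightarrow> 'v set" where
  "nrm_closure M = {r. \<forall>e>0. \<exists>m\<in>M. nrm (r - m) < e}"

lemma nrm_closure_lower_bound:
  assumes "\<And>m. m \<in> M \<Longrightarrow> d \<le> nrm (w - m)" and "q \<in> nrm_closure M"
  shows "d \<le> nrm (w - q)"
proof (rule field_le_epsilon)
  fix e :: real assume "e > 0"
  then obtain m where "m \<in> M" "nrm (q - m) < e"
    using assms(2) unfolding nrm_closure_def by blast
  then show "d \<le> nrm (w - q) + e"
    using assms(1) nrm_diff_triangle[of w m q] by fastforce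
qed

lemma orthogonal_if_nearest:
  assumes "\<And>t. nrm s \<le> nrm (s + sc t m)"
  shows "ip m s = 0"
proof (rule ccontr)
  assume "ip m s \<noteq> 0"
  define q where "q = (cmod (ip m s))\<^sup>2"
  define lam :: real where "lam = 1 / ((nrm m)\<^sup>2 + 1)"
  have "q > 0" "lam > 0"
    using \<open>ip m s \<noteq> 0\<close> by (simp_all add: q_def lam_def add_nonneg_pos)
  define t where "t = - complex_of_real lam * ip m s"
  have "ip s (sc t m) = - complex_of_real lam * (ip m s * cnj (ip m s))"
    using ip_cnj[of s m] by (simp add: ip_sc_right t_def)
  also have "\<dots> = - complex_of_real (lam * q)"
    by (simp add: complex_norm_square[symmetric] q_def)
  finally have "Re (ip s (sc t m)) = - lam * q"
    by simp
  moreover have "(nrm (sc t m))\<^sup>2 = lam\<^sup>2 * q * (nrm m)\<^sup>2"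
    using \<open>lam > 0\<close> by (simp add: nrm_sc t_def norm_mult power_mult_distrib q_def)
  ultimately have "(nrm (s + sc t m))\<^sup>2 = (nrm s)\<^sup>2 - lam * q * (2 - lam * (nrm m)\<^sup>2)"
    using nrm_add_power2[of s "sc t m"] by (simp add: algebra_simps power2_eq_square)
  moreover have "lam * (nrm m)\<^sup>2 < 1"
    by (simp add: lam_def pos_divide_less_eq add_nonneg_pos)
  ultimately have "(nrm (s + sc t m))\<^sup>2 < (nrm s)\<^sup>2"
    using \<open>q > 0\<close> \<open>lam > 0\<close> by simp
  moreover have "(nrm s)\<^sup>2 \<le> (nrm (s + sc t m))\<^sup>2"
    using assms[of t] by (simp add: power_mono)
  ultimately show False
    by simp
qed

lemma minimizing_sequence_Cauchy:
  assumes M: "lin_subspace M" and mm: "\<And>n. mm n \<in> M"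
    and near: "\<And>n. (nrm (w - mm n))\<^sup>2 < d + 1 / (real n + 1)"
    and inf: "\<And>m. m \<in> M \<Longrightarrow> d \<le> (nrm (w - m))\<^sup>2"
  shows "nrm_Cauchy mm"
  unfolding nrm_Cauchy_def
proof (intro allI impI)
  fix e :: real assume e: "e > 0"
  have bound: "(nrm (mm n - mm k))\<^sup>2 < 2 / (real n + 1) + 2 / (real k + 1)" for n k
  proof -
    have "sc (1/2) (mm n + mm k) \<in> M"
      using M mm unfolding lin_subspace_def by blast
    then show ?thesis
      using apollonius[of "mm n" "mm k" w] near[of n] near[of k] inf by fastforce
  qed
  obtain N :: nat where N: "4 / e\<^sup>2 < real N"
    using reals_Archimedean2 by blast
  have "4 / (real N + 1) < e\<^sup>2"
    using N e by (simp add: field_simps) (smt (verit) zero_less_power)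
  moreover have frac: "2 / (real n + 1) \<le> 2 / (real N + 1)" if "n \<ge> N" for n
    using that by (simp add: frac_le)
  ultimately have "(nrm (mm m - mm n))\<^sup>2 < e\<^sup>2" if "m \<ge> N" "n \<ge> N" for m n
    using bound[of m n] frac[OF that(1)] frac[OF that(2)] by linarith
  then show "\<exists>N. \<forall>m\<ge>N. \<forall>n\<ge>N. nrm (mm m - mm n) < e"
    using e by (meson power_less_imp_less_base less_imp_le)
qed

lemma nearest_point_exists:
  assumes comp: "complete_wrt nrm" and M: "lin_subspace M"
  shows "\<exists>r\<in>nrm_closure M. \<forall>q\<in>nrm_closure M. nrm (w - r) \<le> nrm (w - q)"
proof -
  define d where "d = Inf {(nrm (w - m))\<^sup>2 | m. m \<in> M}"
  have ne: "{(nrm (w - m))\<^sup>2 | m. m \<in> M} \<noteq> {}"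
    using M unfolding lin_subspace_def by blast
  have bdd: "bdd_below {(nrm (w - m))\<^sup>2 | m. m \<in> M}"
    by (rule bdd_belowI[of _ 0]) auto
  have inf: "d \<le> (nrm (w - m))\<^sup>2" if "m \<in> M" for m
    unfolding d_def using that by (intro cInf_lower[OF _ bdd]) auto
  have "d \<ge> 0"
    unfolding d_def using ne by (intro cInf_greatest) auto
  have "\<exists>m\<in>M. (nrm (w - m))\<^sup>2 < d + 1 / (real n + 1)" for n
    using cInf_lessD[OF ne, of "d + 1 / (real n + 1)"] unfolding d_def[symmetric] by auto
  then obtain mm where mm: "\<And>n. mm n \<in> M" and near: "\<And>n. (nrm (w - mm n))\<^sup>2 < d + 1 / (real n + 1)"
    by metis
  obtain r where r: "nrm_tendsto mm r"
    using comp minimizing_sequence_Cauchy[OF M mm near inf] unfolding complete_wrt_iff by blast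
  have "r \<in> nrm_closure M"
    unfolding nrm_closure_def
  proof (intro CollectI allI impI)
    fix e :: real assume "e > 0"
    then obtain N where "\<forall>n\<ge>N. nrm (mm n - r) < e"
      using r unfolding nrm_tendsto_def by blast
    then show "\<exists>m\<in>M. nrm (r - m) < e"
      using mm nrm_minus_commute by (metis order_refl)
  qed
  moreover have "nrm (w - r) \<le> sqrt d + e" if "e > 0" for e
  proof -
    obtain N where N: "\<forall>n\<ge>N. nrm (mm n - r) < e / 2"
      using r \<open>e > 0\<close> unfolding nrm_tendsto_def by (meson half_gt_zero)
    obtain n0 :: nat where "4 / e\<^sup>2 < real n0"
      using reals_Archimedean2 by blast
    define n where "n = max N n0"
    have "4 / e\<^sup>2 < real n + 1"
      using \<open>4 / e\<^sup>2 < real n0\<close> by (simp add: n_def)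
    then have "1 / (real n + 1) < (e / 2)\<^sup>2"
      using \<open>e > 0\<close> by (simp add: field_simps power_divide)
    have "nrm (w - mm n) = sqrt ((nrm (w - mm n))\<^sup>2)"
      by simp
    also have "\<dots> < sqrt (d + (e / 2)\<^sup>2)"
      using near[of n] \<open>1 / (real n + 1) < (e / 2)\<^sup>2\<close> by (intro real_sqrt_less_mono) linarith
    also have "\<dots> \<le> sqrt d + e / 2"
      using \<open>d \<ge> 0\<close> \<open>e > 0\<close> sqrt_add_le_add_sqrt[of d "(e / 2)\<^sup>2"] by simp
    finally have "nrm (w - mm n) < sqrt d + e / 2" .
    moreover have "nrm (mm n - r) < e / 2"
      using N by (simp add: n_def)
    ultimately show ?thesis
      using nrm_diff_triangle[of w r "mm n"] by linarith
  qed
  then have "nrm (w - r) \<le> sqrt d"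
    by (rule field_le_epsilon)
  moreover have "sqrt d \<le> nrm (w - q)" if "q \<in> nrm_closure M" for q
    using inf real_le_lsqrt by (intro nrm_closure_lower_bound[OF _ that]) auto
  ultimately show ?thesis
    by (meson order_trans)
qed

lemma projection_theorem:
  assumes comp: "complete_wrt nrm" and M: "lin_subspace M"
  shows "\<exists>r\<in>nrm_closure M. \<forall>m\<in>M. ip m (w - r) = 0"
proof -
  obtain r where r: "r \<in> nrm_closure M" and near: "\<And>q. q \<in> nrm_closure M \<Longrightarrow> nrm (w - r) \<le> nrm (w - q)"
    using nearest_point_exists[OF comp M] by blast
  have "ip m (w - r) = 0" if "m \<in> M" for m
  proof (rule orthogonal_if_nearest)
    fix t
    have "r - sc t m \<in> nrm_closure M"
      unfolding nrm_closure_def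
    proof (intro CollectI allI impI)
      fix e :: real assume "e > 0"
      then obtain m' where "m' \<in> M" "nrm (r - m') < e"
        using r unfolding nrm_closure_def by blast
      moreover have "m' - sc t m \<in> M"
        using M \<open>m' \<in> M\<close> \<open>m \<in> M\<close> lin_subspace_diff unfolding lin_subspace_def by blast
      moreover have "r - sc t m - (m' - sc t m) = r - m'"
        by simp
      ultimately show "\<exists>m''\<in>M. nrm (r - sc t m - m'') < e"
        by metis
    qed
    moreover have "w - (r - sc t m) = w - r + sc t m"
      by simp
    ultimately show "nrm (w - r) \<le> nrm (w - r + sc t m)"
      using near by metis
  qed
  with r show ?thesis
    by blast
qed

lemma riesz_representation:
  assumes comp: "complete_wrt nrm"
    and add: "\<And>a b. phi (a + b) = phi a + phi b"
    and hom: "\<And>c a. phi (sc c a) = c * phi a"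
    and bnd: "\<And>a. cmod (phi a) \<le> C * nrm a"
  shows "\<exists>x. \<forall>z. phi z = ip x z"
proof (cases "\<forall>z. phi z = 0")
  case True
  then show ?thesis
    by (intro exI[of _ 0]) simp
next
  case False
  then obtain w where w: "phi w \<noteq> 0"
    by blast
  have "phi 0 = 0"
    using add[of 0 0] by simp
  have phi_diff: "phi (a - b) = phi a - phi b" for a b
    using add[of "a - b" b] by simp
  define N where "N = {z. phi z = 0}"
  have "lin_subspace N"
    using \<open>phi 0 = 0\<close> unfolding lin_subspace_def N_def by (auto simp: add hom)
  then obtain r where r: "r \<in> nrm_closure N" and orth: "\<And>m. m \<in> N \<Longrightarrow> ip m (w - r) = 0"
    using projection_theorem[OF comp] by blast
  have "cmod (phi r) \<le> 0"
  proof (rule field_le_epsilon)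
    fix e :: real assume "e > 0"
    then have "e / (\<bar>C\<bar> + 1) > 0"
      by (intro divide_pos_pos) auto
    then obtain m where "m \<in> N" and m: "nrm (r - m) < e / (\<bar>C\<bar> + 1)"
      using r unfolding nrm_closure_def by blast
    then have "cmod (phi r) \<le> C * nrm (r - m)"
      using bnd[of "r - m"] phi_diff by (simp add: N_def)
    also have "\<dots> \<le> (\<bar>C\<bar> + 1) * (e / (\<bar>C\<bar> + 1))"
      using m by (intro mult_mono) auto
    finally show "cmod (phi r) \<le> 0 + e"
      by simp
  qed
  define v where "v = w - r"
  have phi_v: "phi v = phi w"
    using \<open>cmod (phi r) \<le> 0\<close> phi_diff by (simp add: v_def)
  then have "v \<noteq> 0"
    using w \<open>phi 0 = 0\<close> by auto
  then have vv: "ip v v \<noteq> 0"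
    using ip_self_eq_0D by blast
  have vv_real: "cnj (ip v v) = ip v v"
    by (simp add: ip_self_eq_nrm)
  show ?thesis
  proof (intro exI allI)
    fix z
    have "z - sc (phi z / phi v) v \<in> N"
      using phi_v w by (simp add: N_def phi_diff hom)
    then have "ip z v = cnj (phi z / phi v) * ip v v"
      using orth[of "z - sc (phi z / phi v) v"] by (simp add: v_def[symmetric] ip_diff_left ip_sc_left)
    then have "cnj (ip z v) = phi z / phi v * ip v v"
      using vv_real by simp
    then have "ip v z = phi z / phi v * ip v v"
      by (metis ip_cnj)
    then have "phi z = phi v * ip v z / ip v v"
      using vv w phi_v by (simp add: field_simps)
    then show "phi z = ip (sc (cnj (phi v / ip v v)) v) z"
      by (simp add: ip_sc_left)
  qed
qed

subsection \<open>Bounded sesquilinear forms\<close>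

definition sesquilinear :: "('v \<Rightarrow> 'v \<Rightarrow> complex) \<Rightarrow> bool" where
  "sesquilinear F \<longleftrightarrow>
     (\<forall>x y z. F (x + y) z = F x z + F y z) \<and> (\<forall>x y z. F x (y + z) = F x y + F x z)
     \<and> (\<forall>c x y. F (sc c x) y = cnj c * F x y) \<and> (\<forall>c x y. F x (sc c y) = c * F x y)"

lemma sesquilinear_diag_expand:
  assumes "sesquilinear F"
  shows "F (z + sc c y) (z + sc c y) = F z z + c * F z y + cnj c * F y z + cnj c * c * F y y"
  using assms unfolding sesquilinear_def by (simp add: algebra_simps)

lemma sesquilinear_polarization:
  assumes "sesquilinear F"
  shows "4 * F z y = (\<Sum>c\<in>{1, \<i>, - 1, - \<i>}. cnj c * F (z + sc c y) (z + sc c y))"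
proof -
  have "(\<Sum>c\<in>{1, \<i>, - 1, - \<i>}. f c) = f 1 + f \<i> + f (- 1) + f (- \<i>)" for f :: "complex \<Rightarrow> complex"
    by (simp add: complex_eq_iff add.assoc)
  then show ?thesis
    unfolding sesquilinear_diag_expand[OF assms] by (simp add: algebra_simps)
qed

lemma sesquilinear_bound_nrm_add:
  assumes F: "sesquilinear F" and diag: "\<And>w. cmod (F w w) \<le> K * (nrm w)\<^sup>2" and "K \<ge> 0"
  shows "cmod (F z y) \<le> K * (nrm z + nrm y)\<^sup>2"
proof -
  have term_bound: "cmod (cnj c * F (z + sc c y) (z + sc c y)) \<le> K * (nrm z + nrm y)\<^sup>2"
    if "cmod c = 1" for c
  proof -
    have "nrm (z + sc c y) \<le> nrm z + nrm y"
      using nrm_triangle[of z "sc c y"] nrm_sc[of c y] that by simp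
    then have "K * (nrm (z + sc c y))\<^sup>2 \<le> K * (nrm z + nrm y)\<^sup>2"
      using \<open>K \<ge> 0\<close> by (simp add: mult_left_mono power_mono)
    then show ?thesis
      using diag[of "z + sc c y"] that by (simp add: norm_mult)
  qed
  have "4 * cmod (F z y) = cmod (\<Sum>c\<in>{1, \<i>, - 1, - \<i>}. cnj c * F (z + sc c y) (z + sc c y))"
    using sesquilinear_polarization[OF F, of z y] by (metis norm_mult norm_numeral)
  also have "\<dots> \<le> (\<Sum>c\<in>{1, \<i>, - 1, - \<i>}. K * (nrm z + nrm y)\<^sup>2)"
    by (rule sum_norm_le) (auto intro: term_bound)
  also have "\<dots> \<le> 4 * (K * (nrm z + nrm y)\<^sup>2)"
    using \<open>K \<ge> 0\<close> card_insert_le_m1[of 4 "{\<i>, - 1, - \<i>}"]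
    by (simp add: card_insert_if mult_right_mono)
  finally show ?thesis
    by simp
qed

lemma sesquilinear_bound:
  assumes F: "sesquilinear F" and diag: "\<And>w. cmod (F w w) \<le> K * (nrm w)\<^sup>2" and "K \<ge> 0"
  shows "cmod (F z y) \<le> 4 * K * nrm z * nrm y"
proof (cases "z = 0 \<or> y = 0")
  case True
  have "F 0 y = 0" "F z 0 = 0"
    using F unfolding sesquilinear_def by (metis add_0 add_cancel_right_right)+
  with True show ?thesis
    by auto
next
  case False
  define a where "a = nrm z"
  define b where "b = nrm y"
  have "a > 0" "b > 0"
    using False nrm_eq_0_iff nrm_nonneg unfolding a_def b_def by (metis less_eq_real_def)+
  define z' where "z' = sc (complex_of_real (1 / a)) z"
  define y' where "y' = sc (complex_of_real (1 / b)) y"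
  have "nrm z' = 1" "nrm y' = 1"
    using \<open>a > 0\<close> \<open>b > 0\<close> by (simp_all add: z'_def y'_def nrm_sc a_def b_def norm_divide)
  have "z = sc (complex_of_real a) z'" "y = sc (complex_of_real b) y'"
    using \<open>a > 0\<close> \<open>b > 0\<close> by (simp_all add: z'_def y'_def sc_mult[symmetric])
  then have "F z y = complex_of_real (a * b) * F z' y'"
    using F unfolding sesquilinear_def by (metis complex_cnj_complex_of_real mult.assoc mult.left_commute of_real_mult)
  then have "cmod (F z y) = a * b * cmod (F z' y')"
    using \<open>a > 0\<close> \<open>b > 0\<close> by (simp add: norm_mult)
  also have "\<dots> \<le> a * b * (4 * K)"
    using sesquilinear_bound_nrm_add[OF F diag \<open>K \<ge> 0\<close>, of z' y'] \<open>a > 0\<close> \<open>b > 0\<close>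
      \<open>nrm z' = 1\<close> \<open>nrm y' = 1\<close> by simp
  finally show ?thesis
    by (simp add: a_def b_def algebra_simps)
qed

lemma sesquilinear_representation:
  assumes comp: "complete_wrt nrm" and F: "sesquilinear F"
    and diag: "\<And>w. cmod (F w w) \<le> K * (nrm w)\<^sup>2" and "K \<ge> 0"
  shows "\<exists>w. \<forall>z. F z y = ip z w"
proof -
  have "\<exists>w. \<forall>z. cnj (F z y) = ip w z"
  proof (rule riesz_representation[OF comp])
    show "cnj (F (a + b) y) = cnj (F a y) + cnj (F b y)" for a b
      using F unfolding sesquilinear_def by simp
    show "cnj (F (sc c a) y) = c * cnj (F a y)" for c a
      using F unfolding sesquilinear_def by simp
    show "cmod (cnj (F a y)) \<le> 4 * K * nrm y * nrm a" for a
      using sesquilinear_bound[OF F diag \<open>K \<ge> 0\<close>, of a y] by (simp add: algebra_simps)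
  qed
  then show ?thesis
    by (metis complex_cnj_cnj ip_cnj)
qed

subsection \<open>Compactness of the unit ball\<close>

abbreviation pointwise_topology :: "('v \<Rightarrow> complex) topology" where
  "pointwise_topology \<equiv> product_topology (\<lambda>_. euclidean) UNIV"

definition dual_ball :: "('v \<Rightarrow> complex) set" where
  "dual_ball = {g. (\<forall>y z. g (y + z) = g y + g z) \<and> (\<forall>c y. g (sc c y) = c * g y)
     \<and> (\<forall>y. cmod (g y) \<le> nrm y)}"

lemma closedin_pointwise_eq:
  fixes f h :: "('v \<Rightarrow> complex) \<Rightarrow> complex"
  assumes "continuous_map pointwise_topology euclidean f" "continuous_map pointwise_topology euclidean h"
  shows "closedin pointwise_topology {g. f g = h g}"
  using closedin_continuous_map_preimage[OF continuous_map_diff[OF assms], of "{0}"]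
  by (simp add: closed_singleton)

lemma compactin_dual_ball: "compactin pointwise_topology dual_ball"
proof (rule closed_compactin)
  show "compactin pointwise_topology (PiE UNIV (\<lambda>y. cball 0 (nrm y)))"
    by (simp add: compactin_PiE)
  show "dual_ball \<subseteq> PiE UNIV (\<lambda>y. cball 0 (nrm y))"
    unfolding dual_ball_def by auto
  have coord: "continuous_map pointwise_topology euclidean (\<lambda>g. g y)" for y
    by (rule continuous_map_product_projection) simp
  have scaled: "continuous_map pointwise_topology euclidean (\<lambda>g. c * g y)" for c y
  proof -
    have "continuous_map pointwise_topology euclidean ((\<lambda>z. c * z) \<circ> (\<lambda>g. g y))"
      by (rule continuous_map_compose[OF coord]) (auto intro!: continuous_intros)
    then show ?thesis
      by (simp add: comp_def)
  qed
  have bounded: "closedin pointwise_topology {g. cmod (g y) \<le> r}" for y r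
    using closedin_continuous_map_preimage[OF coord, of "cball 0 r"] by simp
  have eq: "dual_ball = (\<Inter>(y, z). {g. g (y + z) = g y + g z}) \<inter> (\<Inter>(c, y). {g. g (sc c y) = c * g y})
      \<inter> (\<Inter>y. {g. cmod (g y) \<le> nrm y})"
    unfolding dual_ball_def by (simp add: set_eq_iff split_paired_All)
  have "closedin pointwise_topology (\<Inter>(y, z). {g. g (y + z) = g y + g z})"
    by (rule closedin_Inter) (auto intro!: closedin_pointwise_eq continuous_map_add coord)
  moreover have "closedin pointwise_topology (\<Inter>(c, y). {g. g (sc c y) = c * g y})"
    by (rule closedin_Inter) (auto intro!: closedin_pointwise_eq coord scaled)
  moreover have "closedin pointwise_topology (\<Inter>y. {g. cmod (g y) \<le> nrm y})"
    by (rule closedin_Inter) (auto intro: bounded)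
  ultimately show "closedin pointwise_topology dual_ball"
    unfolding eq by (intro closedin_Int)
qed

lemma openin_pointwise_balls: "openin pointwise_topology {g. \<forall>j<(n::nat). cmod (g (w j) - c j) < d}"
proof (induction n)
  case (Suc n)
  have "{g. \<forall>j<Suc n. cmod (g (w j) - c j) < d}
      = {g. \<forall>j<n. cmod (g (w j) - c j) < d} \<inter> {g \<in> topspace pointwise_topology. g (w n) \<in> ball (c n) d}"
    by (auto simp: less_Suc_eq dist_norm norm_minus_commute)
  moreover have "openin pointwise_topology {g \<in> topspace pointwise_topology. g (w n) \<in> ball (c n) d}"
    by (rule openin_continuous_map_preimage[OF continuous_map_product_projection]) auto
  ultimately show ?case
    using Suc by auto
qed (use openin_topspace[of pointwise_topology] in simp)

lemma ip_left_inj: "ip x = ip x' \<Longrightarrow> x = x'"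
  using ip_diff_left[of x x' "x - x'"] ip_self_eq_0D[of "x - x'"] by simp

lemma dual_ball_eq_image:
  assumes comp: "complete_wrt nrm"
  shows "dual_ball = ip ` {x. nrm x \<le> 1}"
proof
  show "ip ` {x. nrm x \<le> 1} \<subseteq> dual_ball"
  proof clarify
    fix x assume "nrm x \<le> 1"
    then have "cmod (ip x y) \<le> nrm y" for y
      using cauchy_schwarz[of x y] mult_right_mono[of "nrm x" 1 "nrm y"] by simp
    then show "ip x \<in> dual_ball"
      unfolding dual_ball_def by (simp add: ip_add_right ip_sc_right)
  qed
  show "dual_ball \<subseteq> ip ` {x. nrm x \<le> 1}"
  proof
    fix g assume g: "g \<in> dual_ball"
    then obtain x where x: "\<And>z. g z = ip x z"
      using riesz_representation[OF comp, of g 1] unfolding dual_ball_def by auto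
    have "(nrm x)\<^sup>2 = Re (g x)"
      by (simp add: x nrm_power2)
    also have "\<dots> \<le> cmod (g x)"
      by (rule complex_Re_le_cmod)
    also have "\<dots> \<le> nrm x"
      using g unfolding dual_ball_def by blast
    finally have "(nrm x)\<^sup>2 \<le> nrm x" .
    then have "nrm x * nrm x \<le> nrm x * 1"
      by (simp add: power2_eq_square)
    then have "nrm x \<le> 1"
      using nrm_nonneg[of x] mult_le_cancel_left_pos[of "nrm x" "nrm x" 1] by (cases "nrm x = 0") auto
    moreover have "g = ip x"
      using x by blast
    ultimately show "g \<in> ip ` {x. nrm x \<le> 1}"
      by blast
  qed
qed

lemma compactin_unit_ball:
  assumes comp: "complete_wrt nrm"
    and weakly_open: "\<And>U. U \<in> B \<Longrightarrow> \<exists>V. openin pointwise_topology V \<and> U = {x. ip x \<in> V}"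
    and covers: "{x. nrm x \<le> 1} \<subseteq> \<Union>B"
  shows "compactin (topology_generated_by B) {x. nrm x \<le> 1}"
proof -
  define ball1 where "ball1 = {x. nrm x \<le> 1}"
  define Psi where "Psi = inv_into ball1 ip"
  have dual: "dual_ball = ip ` ball1"
    unfolding ball1_def by (rule dual_ball_eq_image[OF comp])
  have "inj_on ip ball1"
    by (meson inj_onI ip_left_inj)
  then have image: "Psi ` dual_ball = ball1"
    by (simp add: Psi_def dual)
  have "compactin (subtopology pointwise_topology dual_ball) dual_ball"
    using compactin_dual_ball by (simp add: compactin_subtopology)
  moreover have "continuous_map (subtopology pointwise_topology dual_ball) (topology_generated_by B) Psi"
    unfolding continuous_on_generated_topo_iff
  proof (intro conjI allI impI)
    fix U assume "U \<in> B"
    then obtain V where V: "openin pointwise_topology V" and U: "U = {x. ip x \<in> V}"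
      using weakly_open by blast
    have "Psi -` U \<inter> topspace (subtopology pointwise_topology dual_ball) = V \<inter> dual_ball"
      using f_inv_into_f[of _ ip ball1] by (auto simp: U Psi_def dual)
    then show "openin (subtopology pointwise_topology dual_ball)
        (Psi -` U \<inter> topspace (subtopology pointwise_topology dual_ball))"
      using V by (auto simp: openin_subtopology)
  next
    show "Psi ` topspace (subtopology pointwise_topology dual_ball) \<subseteq> \<Union>B"
      using image covers by (simp add: ball1_def)
  qed
  ultimately have "compactin (topology_generated_by B) (Psi ` dual_ball)"
    by (rule image_compactin)
  then show ?thesis
    by (simp add: image ball1_def)
qed

definition sc3 :: "complex \<Rightarrow> 'v \<times> 'v \<times> 'v \<Rightarrow> 'v \<times> 'v \<times> 'v" where
  "sc3 c p = (sc c (fst p), sc c (fst (snd p)), sc c (snd (snd p)))"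

definition ip3 :: "'v \<times> 'v \<times> 'v \<Rightarrow> 'v \<times> 'v \<times> 'v \<Rightarrow> complex" where
  "ip3 p q = ip (fst p) (fst q) + ip (fst (snd p)) (fst (snd q)) + ip (snd (snd p)) (snd (snd q))"

lemma ip3_self:
  "ip3 p p = complex_of_real ((nrm (fst p))\<^sup>2 + (nrm (fst (snd p)))\<^sup>2 + (nrm (snd (snd p)))\<^sup>2)"
  by (simp add: ip3_def ip_self_eq_nrm)

lemma complex_inner_space_triple: "complex_inner_space sc3 ip3"
proof
  show "cvs sc3"
    unfolding cvs_def sc3_def by (simp add: sc_mult sc_add_left sc_add_right)
  show "is_inner sc3 ip3"
    unfolding is_inner_def
  proof (intro conjI allI impI)
    fix x y z c
    show "ip3 x (y + z) = ip3 x y + ip3 x z"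
      by (simp add: ip3_def ip_add_right)
    show "ip3 x (sc3 c y) = c * ip3 x y"
      by (simp add: ip3_def sc3_def ip_sc_right algebra_simps)
    show "ip3 y x = cnj (ip3 x y)"
      unfolding ip3_def using ip_cnj[of "fst x"] ip_cnj[of "fst (snd x)"] ip_cnj[of "snd (snd x)"]
      by simp
    show "0 \<le> Re (ip3 x x)"
      by (simp add: ip3_self)
    assume "ip3 x x = 0"
    then have "(nrm (fst x))\<^sup>2 + (nrm (fst (snd x)))\<^sup>2 + (nrm (snd (snd x)))\<^sup>2 = 0"
      unfolding ip3_self of_real_eq_0_iff .
    then show "x = 0"
      by (simp add: add_nonneg_eq_0_iff nrm_eq_0_iff prod_eq_iff)
  qed
qed

lemma inorm_ip3: "inorm ip3 p = sqrt ((nrm (fst p))\<^sup>2 + (nrm (fst (snd p)))\<^sup>2 + (nrm (snd (snd p)))\<^sup>2)"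
  by (simp add: inorm_def[of ip3] ip3_self)

lemma nrm_le_inorm_ip3:
  "nrm (fst p) \<le> inorm ip3 p" "nrm (fst (snd p)) \<le> inorm ip3 p" "nrm (snd (snd p)) \<le> inorm ip3 p"
  unfolding inorm_ip3 by (auto intro!: real_le_rsqrt)

lemma inorm_ip3_le: "inorm ip3 p \<le> nrm (fst p) + nrm (fst (snd p)) + nrm (snd (snd p))"
  unfolding inorm_ip3 by (rule real_le_lsqrt) (auto simp: power2_sum)

lemma complete_wrt_triple:
  assumes "complete_wrt nrm"
  shows "complete_wrt (inorm ip3)"
  unfolding complete_wrt_def
proof (intro allI impI)
  fix X :: "nat \<Rightarrow> 'v \<times> 'v \<times> 'v"
  assume Cauchy: "\<forall>e>0. \<exists>N. \<forall>m\<ge>N. \<forall>n\<ge>N. inorm ip3 (X m - X n) < e"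
  have component_limit: "\<exists>l. nrm_tendsto (\<lambda>n. f (X n)) l"
    if f_le: "\<And>p. nrm (f p) \<le> inorm ip3 p" and f_diff: "\<And>p q. f (p - q) = f p - f q" for f
  proof -
    have "nrm_Cauchy (\<lambda>n. f (X n))"
      unfolding nrm_Cauchy_def using Cauchy f_le f_diff by (metis order.strict_trans1)
    then show ?thesis
      using assms complete_wrt_iff by blast
  qed
  obtain l1 l2 l3 where
    l1: "nrm_tendsto (\<lambda>n. fst (X n)) l1" and
    l2: "nrm_tendsto (\<lambda>n. fst (snd (X n))) l2" and
    l3: "nrm_tendsto (\<lambda>n. snd (snd (X n))) l3"
    using component_limit[of fst] component_limit[of "\<lambda>p. fst (snd p)"]
      component_limit[of "\<lambda>p. snd (snd p)"] nrm_le_inorm_ip3 by auto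
  show "\<exists>l. \<forall>e>0. \<exists>N. \<forall>n\<ge>N. inorm ip3 (X n - l) < e"
  proof (rule exI[of _ "(l1, l2, l3)"], intro allI impI)
    fix e :: real assume "e > 0"
    then obtain N1 N2 N3 where
      N1: "\<forall>n\<ge>N1. nrm (fst (X n) - l1) < e / 3" and
      N2: "\<forall>n\<ge>N2. nrm (fst (snd (X n)) - l2) < e / 3" and
      N3: "\<forall>n\<ge>N3. nrm (snd (snd (X n)) - l3) < e / 3"
      using l1 l2 l3 unfolding nrm_tendsto_def by (meson divide_pos_pos zero_less_numeral)
    show "\<exists>N. \<forall>n\<ge>N. inorm ip3 (X n - (l1, l2, l3)) < e"
    proof (intro exI allI impI)
      fix n assume "n \<ge> max N1 (max N2 N3)"
      then have "nrm (fst (X n) - l1) < e / 3" "nrm (fst (snd (X n)) - l2) < e / 3"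
        "nrm (snd (snd (X n)) - l3) < e / 3"
        using N1 N2 N3 by auto
      then show "inorm ip3 (X n - (l1, l2, l3)) < e"
        using inorm_ip3_le[of "X n - (l1, l2, l3)"] by simp
    qed
  qed
qed

end

subsection \<open>Proper H*-algebras\<close>

locale proper_H_star =
  fixes sA :: "complex \<Rightarrow> 'a::ring \<Rightarrow> 'a" and ip :: "'a \<Rightarrow> 'a \<Rightarrow> complex"
  assumes proper_H_star: "proper_H_star_algebra sA ip"
begin

sublocale complex_inner_space sA ip
  using proper_H_star unfolding proper_H_star_algebra_def H_star_algebra_def by unfold_locales blast+

lemma sA_mult_left: "sA c (a * b) = sA c a * b"
  using proper_H_star unfolding proper_H_star_algebra_def H_star_algebra_def by blast

lemma sA_mult_right: "sA c (a * b) = a * sA c b"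
  using proper_H_star unfolding proper_H_star_algebra_def H_star_algebra_def by blast

lemma nrm_mult_le: "nrm (a * b) \<le> nrm a * nrm b"
  using proper_H_star unfolding proper_H_star_algebra_def H_star_algebra_def by blast

lemma algebra_complete: "complete_wrt nrm"
  using proper_H_star unfolding proper_H_star_algebra_def H_star_algebra_def by blast

lemma proper:
  fixes a :: 'a
  assumes "\<And>x. a * x = 0"
  shows "a = 0"
  using proper_H_star assms unfolding proper_H_star_algebra_def by blast

lemma is_adjoint_unique:
  assumes "is_adjoint ip a a1" "is_adjoint ip a a2"
  shows "a1 = a2"
proof -
  have "(a1 - a2) * c = 0" for c
  proof -
    have "ip b (a1 * c - a2 * c) = 0" for b
      using assms unfolding is_adjoint_def by (metis ip_diff_right right_minus_eq)
    then have "a1 * c - a2 * c = 0"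
      using ip_self_eq_0D by blast
    then show ?thesis
      by (simp add: left_diff_distrib)
  qed
  then show ?thesis
    using proper by fastforce
qed

lemma adj_eqI: "is_adjoint ip a a' \<Longrightarrow> adj ip a = a'"
  unfolding adj_def using is_adjoint_unique by blast

lemma is_adjoint_adj: "is_adjoint ip a (adj ip a)"
  using proper_H_star adj_eqI unfolding proper_H_star_algebra_def H_star_algebra_def by metis

lemma ip_mult_left: "ip (a * b) c = ip b (adj ip a * c)"
  using is_adjoint_adj unfolding is_adjoint_def by blast

lemma ip_mult_right: "ip (b * a) c = ip b (c * adj ip a)"
  using is_adjoint_adj unfolding is_adjoint_def by blast

lemma adj_adj [simp]: "adj ip (adj ip a) = a"
proof (rule adj_eqI)
  show "is_adjoint ip (adj ip a) a"
    unfolding is_adjoint_def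
  proof (intro allI conjI)
    fix b c
    show "ip (adj ip a * b) c = ip b (a * c)"
      using ip_mult_left[of a c b] ip_cnj[of "adj ip a * b" c] ip_cnj[of b "a * c"] by simp
    show "ip (b * adj ip a) c = ip b (c * a)"
      using ip_mult_right[of c a b] ip_cnj[of "b * adj ip a" c] ip_cnj[of b "c * a"] by simp
  qed
qed

lemma adj_mult: "adj ip (a * b) = adj ip b * adj ip a"
proof (rule adj_eqI)
  show "is_adjoint ip (a * b) (adj ip b * adj ip a)"
    unfolding is_adjoint_def
  proof (intro allI conjI)
    fix x c
    have "ip (a * b * x) c = ip (a * (b * x)) c"
      by (simp add: mult.assoc)
    also have "\<dots> = ip x (adj ip b * (adj ip a * c))"
      by (simp only: ip_mult_left)
    finally show "ip (a * b * x) c = ip x (adj ip b * adj ip a * c)"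
      by (simp add: mult.assoc)
    have "ip (x * (a * b)) c = ip ((x * a) * b) c"
      by (simp add: mult.assoc)
    also have "\<dots> = ip x ((c * adj ip b) * adj ip a)"
      by (simp only: ip_mult_right)
    finally show "ip (x * (a * b)) c = ip x (c * (adj ip b * adj ip a))"
      by (simp add: mult.assoc)
  qed
qed

lemma adj_add: "adj ip (a + b) = adj ip a + adj ip b"
proof (rule adj_eqI)
  show "is_adjoint ip (a + b) (adj ip a + adj ip b)"
    unfolding is_adjoint_def
  proof (intro allI conjI)
    fix x c
    have "ip ((a + b) * x) c = ip (a * x) c + ip (b * x) c"
      by (simp add: distrib_right ip_add_left)
    then show "ip ((a + b) * x) c = ip x ((adj ip a + adj ip b) * c)"
      by (simp only: ip_mult_left distrib_right ip_add_right)
    have "ip (x * (a + b)) c = ip (x * a) c + ip (x * b) c"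
      by (simp add: distrib_left ip_add_left)
    then show "ip (x * (a + b)) c = ip x (c * (adj ip a + adj ip b))"
      by (simp only: ip_mult_right distrib_left ip_add_right)
  qed
qed

lemma adj_sc: "adj ip (sA c a) = sA (cnj c) (adj ip a)"
proof (rule adj_eqI)
  show "is_adjoint ip (sA c a) (sA (cnj c) (adj ip a))"
    unfolding is_adjoint_def
  proof (intro allI conjI)
    fix b d
    have "ip (sA c a * b) d = cnj c * ip b (adj ip a * d)"
      by (simp add: ip_sc_left ip_mult_left flip: sA_mult_left)
    then show "ip (sA c a * b) d = ip b (sA (cnj c) (adj ip a) * d)"
      by (simp add: ip_sc_right flip: sA_mult_left)
    have "ip (b * sA c a) d = cnj c * ip b (d * adj ip a)"
      by (simp add: ip_sc_left ip_mult_right flip: sA_mult_right)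
    then show "ip (b * sA c a) d = ip b (d * sA (cnj c) (adj ip a))"
      by (simp add: ip_sc_right flip: sA_mult_right)
  qed
qed

lemma adj_zero [simp]: "adj ip 0 = 0"
  using adj_add[of 0 0] by simp

lemma adj_minus: "adj ip (- a) = - adj ip a"
  using adj_add[of a "- a"] by (simp add: eq_neg_iff_add_eq_0 add.commute)

lemma adj_diff: "adj ip (a - b) = adj ip a - adj ip b"
  using adj_add[of a "- b"] by (simp add: adj_minus)

lemma adj_mult_self_sum3_eq_0:
  assumes "adj ip s1 * s1 + adj ip s2 * s2 + adj ip s3 * s3 = 0"
  shows "s1 = 0 \<and> s2 = 0 \<and> s3 = 0"
proof -
  have "s1 * v = 0 \<and> s2 * v = 0 \<and> s3 * v = 0" for v
  proof -
    have "ip v ((adj ip s1 * s1 + adj ip s2 * s2 + adj ip s3 * s3) * v)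
        = complex_of_real ((nrm (s1 * v))\<^sup>2 + (nrm (s2 * v))\<^sup>2 + (nrm (s3 * v))\<^sup>2)"
      by (simp add: distrib_right ip_add_right ip_self_eq_nrm mult.assoc flip: ip_mult_left)
    then have "(nrm (s1 * v))\<^sup>2 + (nrm (s2 * v))\<^sup>2 + (nrm (s3 * v))\<^sup>2 = 0"
      using assms by (metis ip_zero_right mult_zero_left of_real_eq_0_iff)
    then show ?thesis
      by (simp add: add_nonneg_eq_0_iff nrm_eq_0_iff)
  qed
  then show ?thesis
    using proper by blast
qed

lemma adj_mult_self_eq_0: "adj ip s * s = 0 \<Longrightarrow> s = 0"
  using adj_mult_self_sum3_eq_0[of s 0 0] by simp

subsection \<open>Approximate units and the trace\<close>

interpretation triple: complex_inner_space sc3 ip3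
  by (rule complex_inner_space_triple)

(* The residual s of the projection of (x1, x2, x3) onto the right ideal it generates in the
   triple space satisfies s1* s1 + s2* s2 + s3* s3 = 0, hence vanishes. *)
lemma right_approximate_unit3:
  assumes "e > 0"
  shows "\<exists>u. nrm (x1 - x1 * u) < e \<and> nrm (x2 - x2 * u) < e \<and> nrm (x3 - x3 * u) < e"
proof -
  define M where "M = {(x1 * u, x2 * u, x3 * u) | u. True}"
  have "triple.lin_subspace M"
    unfolding triple.lin_subspace_def
  proof (intro conjI ballI allI)
    show "0 \<in> M"
      unfolding M_def by (rule CollectI, rule exI[of _ 0]) (simp add: zero_prod_def)
    fix a b c assume "a \<in> M" "b \<in> M"
    then obtain u v where a: "a = (x1 * u, x2 * u, x3 * u)" and b: "b = (x1 * v, x2 * v, x3 * v)"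
      unfolding M_def by blast
    show "a + b \<in> M"
      unfolding M_def a b by (auto simp: distrib_left intro!: exI[of _ "u + v"])
    show "sc3 c a \<in> M"
      unfolding M_def sc3_def a by (auto simp: sA_mult_right intro!: exI[of _ "sA c u"])
  qed
  then obtain r where r: "r \<in> triple.nrm_closure M" and orth: "\<And>m. m \<in> M \<Longrightarrow> ip3 m ((x1, x2, x3) - r) = 0"
    using triple.projection_theorem[OF complete_wrt_triple[OF algebra_complete]] by blast
  obtain r1 r2 r3 where rr: "r = (r1, r2, r3)"
    by (cases r) auto
  define s1 where "s1 = x1 - r1"
  define s2 where "s2 = x2 - r2"
  define s3 where "s3 = x3 - r3"
  have near: "\<exists>u. nrm (r1 - x1 * u) < d \<and> nrm (r2 - x2 * u) < d \<and> nrm (r3 - x3 * u) < d" if "d > 0" for d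
  proof -
    obtain m where "m \<in> M" and m: "inorm ip3 (r - m) < d"
      using r \<open>d > 0\<close> unfolding triple.nrm_closure_def by blast
    then obtain u where "m = (x1 * u, x2 * u, x3 * u)"
      unfolding M_def by blast
    then show ?thesis
      using m nrm_le_inorm_ip3[of "r - m"] rr by (intro exI[of _ u]) auto
  qed
  define g where "g = adj ip x1 * s1 + adj ip x2 * s2 + adj ip x3 * s3"
  have "ip u g = 0" for u
  proof -
    have "(x1 * u, x2 * u, x3 * u) \<in> M"
      unfolding M_def by blast
    from orth[OF this] show ?thesis
      by (simp add: rr s1_def s2_def s3_def g_def ip3_def ip_add_right ip_mult_left)
  qed
  then have "g = 0"
    using ip_self_eq_0D by blast
  moreover have "adj ip g = adj ip s1 * x1 + adj ip s2 * x2 + adj ip s3 * x3"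
    by (simp add: g_def adj_add adj_mult)
  ultimately have orth_sum: "adj ip s1 * x1 + adj ip s2 * x2 + adj ip s3 * x3 = 0"
    by simp
  have "adj ip s1 * r1 + adj ip s2 * r2 + adj ip s3 * r3 = 0"
  proof (rule eq_0_if_nrm_le_eps_mult)
    fix d :: real assume "d > 0"
    then obtain u where u: "nrm (r1 - x1 * u) < d" "nrm (r2 - x2 * u) < d" "nrm (r3 - x3 * u) < d"
      using near by blast
    have "adj ip s1 * r1 + adj ip s2 * r2 + adj ip s3 * r3
        = adj ip s1 * (r1 - x1 * u) + adj ip s2 * (r2 - x2 * u) + adj ip s3 * (r3 - x3 * u)
          + (adj ip s1 * x1 + adj ip s2 * x2 + adj ip s3 * x3) * u"
      by (simp add: algebra_simps)
    then have eq: "adj ip s1 * r1 + adj ip s2 * r2 + adj ip s3 * r3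
        = adj ip s1 * (r1 - x1 * u) + adj ip s2 * (r2 - x2 * u) + adj ip s3 * (r3 - x3 * u)"
      using orth_sum by simp
    have "nrm (adj ip s1 * (r1 - x1 * u) + adj ip s2 * (r2 - x2 * u) + adj ip s3 * (r3 - x3 * u))
        \<le> nrm (adj ip s1 * (r1 - x1 * u)) + nrm (adj ip s2 * (r2 - x2 * u)) + nrm (adj ip s3 * (r3 - x3 * u))"
      by (meson add_mono nrm_triangle order_trans order_refl)
    also have "\<dots> \<le> nrm (adj ip s1) * d + nrm (adj ip s2) * d + nrm (adj ip s3) * d"
      using u by (intro add_mono order_trans[OF nrm_mult_le] mult_left_mono) auto
    finally show "nrm (adj ip s1 * r1 + adj ip s2 * r2 + adj ip s3 * r3)
        \<le> d * (nrm (adj ip s1) + nrm (adj ip s2) + nrm (adj ip s3))"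
      unfolding eq by (simp add: algebra_simps)
  qed
  moreover have "adj ip s1 * s1 + adj ip s2 * s2 + adj ip s3 * s3
      = (adj ip s1 * x1 + adj ip s2 * x2 + adj ip s3 * x3) - (adj ip s1 * r1 + adj ip s2 * r2 + adj ip s3 * r3)"
    by (simp add: s1_def s2_def s3_def algebra_simps)
  ultimately have "adj ip s1 * s1 + adj ip s2 * s2 + adj ip s3 * s3 = 0"
    using orth_sum by simp
  then have "s1 = 0 \<and> s2 = 0 \<and> s3 = 0"
    by (rule adj_mult_self_sum3_eq_0)
  then have "r1 = x1" "r2 = x2" "r3 = x3"
    by (simp_all add: s1_def s2_def s3_def)
  then show ?thesis
    using near[OF assms] by simp
qed

lemma left_approximate_unit:
  assumes "e > 0"
  shows "\<exists>u. nrm (x - u * x) < e"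
proof -
  define M where "M = {u * x | u. True}"
  have "lin_subspace M"
    unfolding lin_subspace_def
  proof (intro conjI ballI allI)
    show "0 \<in> M"
      unfolding M_def by (rule CollectI, rule exI[of _ 0]) simp
    fix a b c assume "a \<in> M" "b \<in> M"
    then obtain u v where a: "a = u * x" and b: "b = v * x"
      unfolding M_def by blast
    show "a + b \<in> M"
      unfolding M_def a b by (auto simp: distrib_right intro!: exI[of _ "u + v"])
    show "sA c a \<in> M"
      unfolding M_def a by (auto simp: sA_mult_left intro!: exI[of _ "sA c u"])
  qed
  then obtain r where r: "r \<in> nrm_closure M" and orth: "\<And>m. m \<in> M \<Longrightarrow> ip m (x - r) = 0"
    using projection_theorem[OF algebra_complete] by blast
  define s where "s = x - r"
  have "ip u (s * adj ip x) = 0" for u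
  proof -
    have "u * x \<in> M"
      unfolding M_def by blast
    from orth[OF this] show ?thesis
      by (simp add: s_def ip_mult_right)
  qed
  then have "s * adj ip x = 0"
    using ip_self_eq_0D by blast
  have "r * adj ip s = 0"
  proof (rule eq_0_if_nrm_le_eps_mult)
    fix d :: real assume "d > 0"
    then obtain u where u: "nrm (r - u * x) < d"
      using r unfolding nrm_closure_def M_def by blast
    have "x * adj ip s = 0"
      using arg_cong[OF \<open>s * adj ip x = 0\<close>, of "adj ip"] by (simp add: adj_mult)
    then have "r * adj ip s = (r - u * x) * adj ip s"
      by (simp add: left_diff_distrib mult.assoc)
    then have "nrm (r * adj ip s) \<le> nrm (r - u * x) * nrm (adj ip s)"
      using nrm_mult_le by simp
    also have "\<dots> \<le> d * nrm (adj ip s)"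
      using u by (simp add: mult_right_mono)
    finally show "nrm (r * adj ip s) \<le> d * nrm (adj ip s)" .
  qed
  moreover have "adj ip (r * adj ip s) = s * adj ip r"
    by (simp add: adj_mult)
  ultimately have "s * adj ip r = 0"
    by simp
  moreover have "adj ip s = adj ip x - adj ip r"
    by (simp add: s_def adj_diff)
  ultimately have "s * adj ip s = 0"
    using \<open>s * adj ip x = 0\<close> by (simp add: right_diff_distrib)
  then have "adj ip s = 0"
    using adj_mult_self_eq_0[of "adj ip s"] by simp
  then have "s = 0"
    using adj_adj[of s] by simp
  obtain m where "m \<in> M" and m: "nrm (r - m) < e"
    using r assms unfolding nrm_closure_def by blast
  then obtain u where "m = u * x"
    unfolding M_def by blast
  then show ?thesis
    using m \<open>s = 0\<close> by (auto simp: s_def)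
qed

lemma nrm_adj_diff_power2:
  "(nrm (adj ip x - adj ip x * adj ip u))\<^sup>2 = (nrm (x - u * x))\<^sup>2 + ((nrm (adj ip x))\<^sup>2 - (nrm x)\<^sup>2)"
proof -
  define X where "X = adj ip x"
  have cross: "ip (X * adj ip u) X = cnj (ip (u * x) x)"
    using ip_mult_right[of X "adj ip u" X] ip_mult_left[of x X u] ip_mult_right[of u x x]
      ip_cnj[of u "x * X"] by (simp add: X_def)
  have square1: "ip (X * adj ip u) (X * adj ip u) = ip (adj ip u * u) (x * X)"
    using ip_mult_left[of X "adj ip u" "X * adj ip u"] ip_mult_right[of "adj ip u" u "x * X"]
    by (simp add: X_def mult.assoc)
  have square2: "ip (u * x) (u * x) = ip (adj ip u * u) (x * X)"
    using ip_mult_right[of u x "u * x"] ip_mult_left[of "adj ip u" u "x * X"]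
    by (simp add: X_def mult.assoc)
  have "ip (X - X * adj ip u) (X - X * adj ip u)
      = ip (x - u * x) (x - u * x) + (ip X X - ip x x)"
    using cross square1 square2 ip_cnj[of "X * adj ip u" X] ip_cnj[of x "u * x"]
    by (simp add: ip_diff_left ip_diff_right)
  then show ?thesis
    unfolding X_def ip_self_eq_nrm
    by (simp only: of_real_add[symmetric] of_real_diff[symmetric] of_real_eq_iff)
qed

lemma nrm_adj [simp]: "nrm (adj ip x) = nrm x"
proof -
  define c where "c = (nrm (adj ip x))\<^sup>2 - (nrm x)\<^sup>2"
  have "c \<ge> 0"
  proof (rule field_le_epsilon)
    fix e :: real assume "e > 0"
    then obtain u where u: "nrm (x - u * x) < sqrt e"
      using left_approximate_unit by (meson real_sqrt_gt_zero)
    have "(nrm (x - u * x))\<^sup>2 < (sqrt e)\<^sup>2"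
      by (rule power_strict_mono) (use u in auto)
    then have "(nrm (x - u * x))\<^sup>2 < e"
      using \<open>e > 0\<close> by simp
    then show "0 \<le> c + e"
      using nrm_adj_diff_power2[of x u] zero_le_power2[of "nrm (adj ip x - adj ip x * adj ip u)"]
      unfolding c_def by linarith
  qed
  moreover have "c \<le> 0"
  proof (rule field_le_epsilon)
    fix e :: real assume "e > 0"
    then obtain w where w: "nrm (adj ip x - adj ip x * w) < sqrt e"
      using right_approximate_unit3[of "sqrt e" "adj ip x" 0 0] by auto
    have "(nrm (adj ip x - adj ip x * w))\<^sup>2 < (sqrt e)\<^sup>2"
      by (rule power_strict_mono) (use w in auto)
    then have "(nrm (adj ip x - adj ip x * w))\<^sup>2 < e"
      using \<open>e > 0\<close> by simp
    moreover have "(nrm (adj ip x - adj ip x * w))\<^sup>2 = (nrm (x - adj ip w * x))\<^sup>2 + c"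
      using nrm_adj_diff_power2[of x "adj ip w"] by (simp add: c_def)
    ultimately show "c \<le> 0 + e"
      using zero_le_power2[of "nrm (x - adj ip w * x)"] by linarith
  qed
  ultimately have "(nrm (adj ip x))\<^sup>2 = (nrm x)\<^sup>2"
    by (simp add: c_def)
  then show ?thesis
    by (simp add: power2_eq_iff_nonneg)
qed

lemma ip_adj_sum3_eq_0:
  assumes "a1 * b1 + a2 * b2 + a3 * b3 = 0"
  shows "ip (adj ip a1) b1 + ip (adj ip a2) b2 + ip (adj ip a3) b3 = 0"
proof -
  let ?S = "ip (adj ip a1) b1 + ip (adj ip a2) b2 + ip (adj ip a3) b3"
  have "cmod ?S \<le> e * (nrm b1 + nrm b2 + nrm b3)" if "e > 0" for e
  proof -
    obtain u where u: "nrm (adj ip a1 - adj ip a1 * u) < e" "nrm (adj ip a2 - adj ip a2 * u) < e"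
        "nrm (adj ip a3 - adj ip a3 * u) < e"
      using right_approximate_unit3[OF \<open>e > 0\<close>] by blast
    have split: "ip (adj ip a) b = ip u (a * b) + ip (adj ip a - adj ip a * u) b" for a b
      using ip_mult_left[of "adj ip a" u b] by (simp add: ip_diff_left)
    have "ip u (a1 * b1) + ip u (a2 * b2) + ip u (a3 * b3) = 0"
      using assms by (simp flip: ip_add_right)
    then have "?S = ip (adj ip a1 - adj ip a1 * u) b1 + ip (adj ip a2 - adj ip a2 * u) b2
        + ip (adj ip a3 - adj ip a3 * u) b3"
      unfolding split by (simp add: algebra_simps)
    also have "cmod \<dots> \<le> cmod (ip (adj ip a1 - adj ip a1 * u) b1)
        + cmod (ip (adj ip a2 - adj ip a2 * u) b2) + cmod (ip (adj ip a3 - adj ip a3 * u) b3)"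
      by (intro order_trans[OF norm_triangle_ineq] add_right_mono norm_triangle_ineq)
    also have "\<dots> \<le> e * nrm b1 + e * nrm b2 + e * nrm b3"
      using u by (intro add_mono order_trans[OF cauchy_schwarz] mult_right_mono) auto
    finally show ?thesis
      by (simp add: algebra_simps)
  qed
  then have "cmod ?S \<le> 0"
    by (rule real_le_0_if_le_eps_mult)
  then show ?thesis
    by simp
qed

lemma sp_mult: "sp ip (a * b) = ip (adj ip a) b"
proof -
  have unique: "z = ip (adj ip a) b" if ex: "\<exists>a' b'. a * b = a' * b' \<and> z = ip (adj ip a') b'" for z
  proof -
    obtain a' b' where "a * b = a' * b'" "z = ip (adj ip a') b'"
      using ex by blast
    then show ?thesis
      using ip_adj_sum3_eq_0[of a b "- a'" b' 0 0] by (simp add: adj_minus ip_minus_left)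
  qed
  show ?thesis
    unfolding sp_def by (rule someI2[of _ "ip (adj ip a) b"]) (blast, rule unique)
qed

lemma sp_add:
  assumes "p \<in> trace_class" "q \<in> trace_class" "p + q \<in> trace_class"
  shows "sp ip (p + q) = sp ip p + sp ip q"
proof -
  obtain a1 b1 a2 b2 a3 b3 where "p = a1 * b1" "q = a2 * b2" "p + q = a3 * b3"
    using assms unfolding trace_class_def by blast
  then show ?thesis
    using ip_adj_sum3_eq_0[of a3 b3 "- a1" b1 "- a2" b2]
    by (simp add: sp_mult adj_minus ip_minus_left algebra_simps)
qed

lemma sp_sc:
  assumes "p \<in> trace_class"
  shows "sp ip (sA c p) = c * sp ip p"
proof -
  obtain a b where "p = a * b"
    using assms unfolding trace_class_def by blast
  moreover have "sA c (a * b) = sA c a * b"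
    by (rule sA_mult_left)
  ultimately show ?thesis
    by (simp add: sp_mult adj_sc ip_sc_left)
qed

end

subsection \<open>Hilbert modules\<close>

locale H_star_module = proper_H_star sA ip for sA :: "complex \<Rightarrow> 'a::ring \<Rightarrow> 'a" and ip +
  fixes sL :: "complex \<Rightarrow> 'b::ab_group_add \<Rightarrow> 'b" and act :: "'b \<Rightarrow> 'a \<Rightarrow> 'b"
    and br :: "'b \<Rightarrow> 'b \<Rightarrow> 'a"
  assumes Hilbert_module: "Hilbert_module sA ip sL act br"
begin

sublocale L: complex_inner_space sL "\<lambda>x y. sp ip (br x y)"
  using Hilbert_module unfolding Hilbert_module_def by unfold_locales blast+

lemma L_complete: "complete_wrt L.nrm"
  using Hilbert_module unfolding Hilbert_module_def by blast

lemma br_trace_class: "br x y \<in> trace_class"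
  using Hilbert_module unfolding Hilbert_module_def by blast

lemma br_add_right: "br x (y + z) = br x y + br x z"
  using Hilbert_module unfolding Hilbert_module_def by blast

lemma br_sc_right: "br x (sL c y) = sA c (br x y)"
  using Hilbert_module unfolding Hilbert_module_def by blast

lemma adj_br: "adj ip (br x y) = br y x"
  using Hilbert_module unfolding Hilbert_module_def by blast

lemma br_add_left: "br (x + y) z = br x z + br y z"
proof -
  have "br (x + y) z = adj ip (br z (x + y))"
    by (simp add: adj_br)
  then show ?thesis
    by (simp add: br_add_right adj_add adj_br)
qed

lemma br_sc_left: "br (sL c x) y = sA (cnj c) (br x y)"
proof -
  have "br (sL c x) y = adj ip (br y (sL c x))"
    by (simp add: adj_br)
  then show ?thesis
    by (simp add: br_sc_right adj_sc adj_br)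
qed

lemma br_diff_left: "br (x - x') y = br x y - br x' y"
  using br_add_left[of "x - x'" x' y] by simp

lemma br_self_eq_adj_mult_self: "\<exists>e. br x x = adj ip e * e \<and> nrm e = L.nrm x"
proof (cases "x = 0")
  case True
  then show ?thesis
    using br_add_left[of 0 0 0] by (intro exI[of _ 0]) simp
next
  case False
  have "\<forall>x. x \<noteq> 0 \<longrightarrow> (\<exists>a. a \<noteq> 0 \<and> br x x = adj ip a * a)"
    using Hilbert_module unfolding Hilbert_module_def by (elim conjE)
  then obtain a where a: "br x x = adj ip a * a"
    using False by blast
  then have "(L.nrm x)\<^sup>2 = (nrm a)\<^sup>2"
    by (simp add: a L.nrm_power2 nrm_power2 sp_mult)
  then show ?thesis
    using a by (auto simp: power2_eq_iff_nonneg)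
qed

context
  fixes S :: "'a \<Rightarrow> 'a"
  assumes S: "S \<in> C_alg sA ip"
begin

lemma multiplier_add: "S (x + y) = S x + S y"
  using S unfolding C_alg_def bounded_op_def by blast

lemma multiplier_sc: "S (sA c x) = sA c (S x)"
  using S unfolding C_alg_def bounded_op_def by blast

lemma multiplier_mult: "S (x * y) = S x * y"
  using S unfolding C_alg_def by blast

lemma multiplier_bounded: "\<exists>K\<ge>0. \<forall>x. nrm (S x) \<le> K * nrm x"
proof -
  obtain K where "\<And>x. nrm (S x) \<le> K * nrm x"
    using S unfolding C_alg_def bounded_op_def by blast
  then have "nrm (S x) \<le> max K 0 * nrm x" for x
    by (meson max.cobounded1 mult_right_mono nrm_nonneg order_trans)
  then show ?thesis
    by (intro exI[of _ "max K 0"]) auto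
qed

lemma multiplier_trace_class: "p \<in> trace_class \<Longrightarrow> S p \<in> trace_class"
  unfolding trace_class_def using multiplier_mult by blast

lemma sp_multiplier_add:
  assumes "p \<in> trace_class" "q \<in> trace_class" "p + q \<in> trace_class"
  shows "sp ip (S (p + q)) = sp ip (S p) + sp ip (S q)"
proof -
  have "S p + S q \<in> trace_class"
    using multiplier_trace_class[OF assms(3)] by (simp add: multiplier_add)
  then show ?thesis
    using assms by (simp add: multiplier_add sp_add multiplier_trace_class)
qed

lemma sesquilinear_multiplier_trace_form: "L.sesquilinear (\<lambda>z y. sp ip (S (br z y)))"
  unfolding L.sesquilinear_def
proof (intro conjI allI)
  fix x y z c
  show "sp ip (S (br (x + y) z)) = sp ip (S (br x z)) + sp ip (S (br y z))"
    unfolding br_add_left by (rule sp_multiplier_add) (simp_all add: br_trace_class flip: br_add_left)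
  show "sp ip (S (br x (y + z))) = sp ip (S (br x y)) + sp ip (S (br x z))"
    unfolding br_add_right by (rule sp_multiplier_add) (simp_all add: br_trace_class flip: br_add_right)
  show "sp ip (S (br (sL c x) y)) = cnj c * sp ip (S (br x y))"
    by (simp add: br_sc_left multiplier_sc sp_sc multiplier_trace_class br_trace_class)
  show "sp ip (S (br x (sL c y))) = c * sp ip (S (br x y))"
    by (simp add: br_sc_right multiplier_sc sp_sc multiplier_trace_class br_trace_class)
qed

lemma multiplier_trace_form_diag_bound:
  obtains K where "K \<ge> 0" "\<And>w. cmod (sp ip (S (br w w))) \<le> K * (L.nrm w)\<^sup>2"
proof -
  obtain K where "K \<ge> 0" and K: "\<And>x. nrm (S x) \<le> K * nrm x"
    using multiplier_bounded by blast
  have "cmod (sp ip (S (br w w))) \<le> K * (L.nrm w)\<^sup>2" for w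
  proof -
    obtain e where e: "br w w = adj ip e * e" "nrm e = L.nrm w"
      using br_self_eq_adj_mult_self by blast
    have "cmod (sp ip (S (br w w))) = cmod (ip (adj ip (S (adj ip e))) e)"
      by (simp add: e(1) multiplier_mult sp_mult)
    also have "\<dots> \<le> nrm (S (adj ip e)) * nrm e"
      using cauchy_schwarz[of "adj ip (S (adj ip e))" e] by simp
    also have "\<dots> \<le> K * nrm e * nrm e"
      using K[of "adj ip e"] by (simp add: mult_right_mono)
    finally show ?thesis
      by (simp add: e(2) power2_eq_square mult.assoc)
  qed
  with \<open>K \<ge> 0\<close> show ?thesis
    using that by blast
qed

lemma multiplier_trace_form_representation: "\<exists>w. \<forall>z. sp ip (S (br z y)) = sp ip (br z w)"
proof -
  obtain K where "K \<ge> 0" "\<And>w. cmod (sp ip (S (br w w))) \<le> K * (L.nrm w)\<^sup>2"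
    using multiplier_trace_form_diag_bound by blast
  then show ?thesis
    using L.sesquilinear_representation[OF L_complete sesquilinear_multiplier_trace_form] by blast
qed

end

lemma weak_star_base_weakly_open:
  assumes "U \<in> weak_star_base sA ip br"
  shows "\<exists>V. openin L.pointwise_topology V \<and> U = {x. (\<lambda>y. sp ip (br x y)) \<in> V}"
proof -
  have "\<exists>(n::nat) x0 y S d. U = {x. \<forall>j<n. cmod (sp ip (S j (br x (y j) - br x0 (y j)))) < d}
      \<and> (\<forall>j<n. S j \<in> C_alg sA ip) \<and> 0 < d"
    using assms unfolding weak_star_base_def by (simp only: mem_Collect_eq)
  then obtain n :: nat and x0 y S d where
    U: "U = {x. \<forall>j<n. cmod (sp ip (S j (br x (y j) - br x0 (y j)))) < d}"
    and S: "\<forall>j<n. S j \<in> C_alg sA ip"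
    by (elim exE conjE)
  have "\<forall>j. \<exists>w. j < n \<longrightarrow> (\<forall>z. sp ip (S j (br z (y j))) = sp ip (br z w))"
  proof
    fix j
    show "\<exists>w. j < n \<longrightarrow> (\<forall>z. sp ip (S j (br z (y j))) = sp ip (br z w))"
    proof (cases "j < n")
      case True
      with S have "S j \<in> C_alg sA ip"
        by blast
      from multiplier_trace_form_representation[OF this, of "y j"] show ?thesis
        by blast
    qed simp
  qed
  from choice[OF this] obtain w
    where w: "\<forall>j. j < n \<longrightarrow> (\<forall>z. sp ip (S j (br z (y j))) = sp ip (br z (w j)))"
    by (elim exE)
  have "sp ip (S j (br x (y j) - br x0 (y j))) = sp ip (br x (w j)) - sp ip (br x0 (w j))"
    if "j < n" for j x
  proof -
    have "sp ip (S j (br x (y j) - br x0 (y j))) = sp ip (S j (br (x - x0) (y j)))"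
      by (simp only: br_diff_left)
    also have "\<dots> = sp ip (br (x - x0) (w j))"
      using w that by blast
    finally show ?thesis
      by (simp only: L.ip_diff_left)
  qed
  then have "U = {x. (\<lambda>y. sp ip (br x y)) \<in> {g. \<forall>j<n. cmod (g (w j) - sp ip (br x0 (w j))) < d}}"
    unfolding U by auto
  then show ?thesis
    using L.openin_pointwise_balls[of n w "\<lambda>j. sp ip (br x0 (w j))" d] by blast
qed

lemma UNIV_in_weak_star_base: "UNIV \<in> weak_star_base sA ip br"
  unfolding weak_star_base_def
  by (rule CollectI, rule exI[of _ 0], rule exI[of _ 0], rule exI[of _ "\<lambda>_. 0"],
      rule exI[of _ "\<lambda>_. id"], rule exI[of _ 1]) simp

lemma compactin_unit_ball_weak_star:
  "compactin (weak_star_topology sA ip br) {x. L.nrm x \<le> 1}"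
  unfolding weak_star_topology_def
  using L.compactin_unit_ball[OF L_complete weak_star_base_weakly_open] UNIV_in_weak_star_base
  by blast

end

theorem mainTheorem3:
  fixes sA :: "complex \<Rightarrow> 'a::ring \<Rightarrow> 'a" and ip :: "'a \<Rightarrow> 'a \<Rightarrow> complex"
    and sL :: "complex \<Rightarrow> 'b::ab_group_add \<Rightarrow> 'b" and act :: "'b \<Rightarrow> 'a \<Rightarrow> 'b"
    and br :: "'b \<Rightarrow> 'b \<Rightarrow> 'a"
  assumes "proper_H_star_algebra sA ip"
    and "Hilbert_module sA ip sL act br"
  shows "compactin (weak_star_topology sA ip br) {x. Lnorm ip br x \<le> 1}"
proof -
  interpret H_star_module sA ip sL act br
    using assms by (simp add: H_star_module_def H_star_module_axioms_def proper_H_star_def)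
  show ?thesis
    using compactin_unit_ball_weak_star by (simp add: Lnorm_def)
qed

end
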